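(* Assume Assumptions A, B, condition (P), and $c_1^2+c_2^2>0$. Then the maximal existence endpoint $R_{\max}$ of the solution $S$ of (IVP) equals $\infty$ (i.e. the solution exists on $[r_0,\infty)$) in each of the following cases: (1a) $c_2\le0<c_1$ and (C1); (1b) $c_1=0>c_2$ and (C4); (2a) $c_1\le0<c_2$ and (C3); (2b) $c_2=0>c_1$ and (C2); (3) $c_1,c_2>0$ and both (C1) and (C3); (4) $c_1,c_2<0$.
   Context: Fix an integer $n\ge2$. For $i=1,2$, $g_i(s)=a^{(i)}_0+a^{(i)}_1s^{\alpha^{(i)}_1}+\dots+a^{(i)}_{N_i}s^{\alpha^{(i)}_{N_i}}$ ($s\ge0$) with $N_i\ge0$, $a^{(i)}_0>0$, $a^{(i)}_j\ge0$, real $0<\alpha^{(i)}_1<\dots<\alpha^{(i)}_{N_i}$; $G_i(u)=g_i(|u|)u$ for $u\in\mathbb R$. Assumption A: $f_1,f_2\in C([0,1])\cap C^1((0,1))$, $f_1(0)=0$, $f_2(1)=0$, $f_1'>0$, $f_2'<0$ on $(0,1)$. Assumption B: $p_c'\in C^1((0,1))$, $p_c'>0$ on $(0,1)$. $F_i(S)=1/(p_c'(S)f_i(S))$. (IVP): $S'(r)=F(r,S(r))$ for $r>r_0$, $S(r_0)=s_0\in(0,1)$, $0<S(r)<1$, with $F(r,S)=G_2(c_2r^{1-n})F_2(S)-G_1(c_1r^{1-n})F_1(S)$; its unique solution on a maximal interval $[r_0,R_{\max})$ exists. Condition (P): $\lim_{S\to0^+}p_c'(S)f_1(S)=\lim_{S\to1^-}p_c'(S)f_2(S)=+\infty$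 (so $F_1(S)\to0$ as $S\to0^+$ and $F_2(S)\to0$ as $S\to1^-$). Conditions: (C1) $\limsup_{S\to0^+}F_1'(S)<\infty$; (C2) $\liminf_{S\to1^-}F_1'(S)>-\infty$; (C3) $\liminf_{S\to1^-}F_2'(S)>-\infty$; (C4) $\limsup_{S\to0^+}F_2'(S)<\infty$. *)

theory Defs
  imports "HOL-Analysis.Analysis" "HOL-Library.Liminf_Limsup"
begin

definition gfun :: "nat \<Rightarrow> (nat \<Rightarrow> real) \<Rightarrow> (nat \<Rightarrow> real) \<Rightarrow> real \<Rightarrow> real" where
  "gfun N a \<alpha> s = a 0 + (\<Sum>j=1..N. a j * s powr \<alpha> j)"

definition admissible_g :: "nat \<Rightarrow> (nat \<Rightarrow> real) \<Rightarrow> (nat \<Rightarrow> real) \<Rightarrow> bool" where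
  "admissible_g N a \<alpha> \<longleftrightarrow> a 0 > 0 \<and> (\<forall>j\<in>{1..N}. a j \<ge> 0)
     \<and> (\<forall>j\<in>{1..N}. 0 < \<alpha> j) \<and> (\<forall>i\<in>{1..N}. \<forall>j\<in>{1..N}. i < j \<longrightarrow> \<alpha> i < \<alpha> j)"

definition Gfun :: "nat \<Rightarrow> (nat \<Rightarrow> real) \<Rightarrow> (nat \<Rightarrow> real) \<Rightarrow> real \<Rightarrow> real" where
  "Gfun N a \<alpha> u = gfun N a \<alpha> \<bar>u\<bar> * u"

text \<open>F_i(S) = 1 / (p_c'(S) f_i(S)), with dpc standing for p_c'.\<close>
definition Fi :: "(real \<Rightarrow> real) \<Rightarrow> (real \<Rightarrow> real) \<Rightarrow> real \<Rightarrow> real" where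
  "Fi dpc f S = 1 / (dpc S * f S)"

definition Frhs :: "nat \<Rightarrow> real \<Rightarrow> real \<Rightarrow> (real \<Rightarrow> real) \<Rightarrow> (real \<Rightarrow> real)
     \<Rightarrow> (real \<Rightarrow> real) \<Rightarrow> (real \<Rightarrow> real) \<Rightarrow> (real \<Rightarrow> real) \<Rightarrow> real \<Rightarrow> real \<Rightarrow> real" where
  "Frhs n c1 c2 G1 G2 dpc f1 f2 r S =
     G2 (c2 * r powr (1 - real n)) * Fi dpc f2 S - G1 (c1 * r powr (1 - real n)) * Fi dpc f1 S"

end

theory Submission
  imports Defs
begin

text \<open>The solution can only cease to exist by reaching \<open>S = 0\<close> or \<open>S = 1\<close>. Near \<open>S = 0\<close> the
  right-hand side \<open>G2(c2 r^(1-n)) F2(S) - G1(c1 r^(1-n)) F1(S)\<close> is bounded below by \<open>-C S\<close>,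
  uniformly in \<open>r \<ge> r0\<close>: each term either has the favourable sign or is \<open>O(S)\<close> by (C1) or (C4),
  using \<open>F2 = o(F1)\<close> at \<open>0\<close>; when \<open>c1, c2 < 0\<close> the two coefficients are comparable and
  \<open>F2 = o(F1)\<close> makes the right-hand side nonnegative. Symmetrically it is at most \<open>C (1 - S)\<close>
  near \<open>S = 1\<close>. Hence the barriers \<open>d exp(-2K(r - r0))\<close> and \<open>1 - e exp(-2K(r - r0))\<close> with
  \<open>K > |C|\<close> are never crossed. The equation with \<open>S\<close> clamped between these barriers is Lipschitz
  in \<open>S\<close> on compact time intervals, so Picard's method gives a global solution, which never
  touches the clamp and therefore solves the original equation on \<open>[r0, \<infinity>)\<close>.\<close>

section \<open>Global solutions of scalar ODEs\<close>

lemma continuous_on_compose_Pair: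
  assumes "continuous_on (S \<times> T) (\<lambda>(t, x). f t x)" "continuous_on S y" "y ` S \<subseteq> T"
  shows "continuous_on S (\<lambda>t. f t (y t))"
proof -
  have "continuous_on S (\<lambda>t. (t, y t))" "(\<lambda>t. (t, y t)) ` S \<subseteq> S \<times> T"
    using assms(2,3) by (auto intro!: continuous_intros)
  from continuous_on_compose2[OF assms(1) this] show ?thesis by simp
qed

lemma ext_cont_in_bcontfun:
  fixes h :: "real \<Rightarrow> real"
  assumes "continuous_on {a..b} h"
  shows "ext_cont h a b \<in> bcontfun"
proof -
  have "bounded (h ` cbox a b)"
    using assms by (intro compact_imp_bounded compact_continuous_image) auto
  then show ?thesis
    using assms unfolding bcontfun_def
    by (auto intro!: clamp_continuous_on clamp_bounded simp: ext_cont_def)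
qed

lemma integral_le_exp_weight:
  fixes g :: "real \<Rightarrow> real"
  assumes "K > 0" "a \<le> x" "g integrable_on {a..x}"
    and bound: "\<And>s. s \<in> {a..x} \<Longrightarrow> \<bar>g s\<bar> \<le> K * D * exp (2 * K * (s - a))"
  shows "\<bar>integral {a..x} g\<bar> \<le> D / 2 * exp (2 * K * (x - a))"
proof -
  have "D \<ge> 0"
  proof -
    have "\<bar>g a\<bar> \<le> K * D" using bound[of a] assms(2) by simp
    then have "0 \<le> K * D" by linarith
    then show ?thesis using assms(1) by (simp add: zero_le_mult_iff)
  qed
  have weight: "((\<lambda>s. K * D * exp (2 * K * (s - a))) has_integral
      D / 2 * exp (2 * K * (x - a)) - D / 2 * exp (2 * K * (a - a))) {a..x}"
    using assms(1,2)
    by (intro fundamental_theorem_of_calculus)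
      (auto intro!: derivative_eq_intros simp: has_real_derivative_iff_has_vector_derivative[symmetric])
  have "\<bar>integral {a..x} g\<bar> \<le> integral {a..x} (\<lambda>s. K * D * exp (2 * K * (s - a)))"
    using integral_norm_bound_integral[OF assms(3) has_integral_integrable[OF weight]] bound
    by simp
  also have "\<dots> \<le> D / 2 * exp (2 * K * (x - a))"
    using integral_unique[OF weight] \<open>D \<ge> 0\<close> by simp
  finally show ?thesis .
qed

definition integral_solution ::
    "(real \<Rightarrow> real \<Rightarrow> real) \<Rightarrow> real \<Rightarrow> real \<Rightarrow> real \<Rightarrow> (real \<Rightarrow> real) \<Rightarrow> bool" where
  "integral_solution f a y0 b y \<longleftrightarrow> continuous_on {a..b} y
     \<and> (\<forall>t\<in>{a..b}. y t = y0 + integral {a..t} (\<lambda>s. f s (y s)))"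

text \<open>Bielecki's trick: \<open>u\<close> stands for \<open>y t * exp (-2 K (t - a))\<close>, so the sup-metric on \<open>u\<close>
  is a weighted sup-metric on \<open>y\<close>, in which the Picard map contracts by the factor \<open>1/2\<close>.
  Outside \<open>[a, b]\<close> the image is extended constantly (\<open>ext_cont\<close>) to make it a bounded
  continuous function on \<open>\<real>\<close>.\<close>
definition weighted_picard_map ::
    "(real \<Rightarrow> real \<Rightarrow> real) \<Rightarrow> real \<Rightarrow> real \<Rightarrow> real \<Rightarrow> real \<Rightarrow> (real \<Rightarrow>\<^sub>C real) \<Rightarrow> (real \<Rightarrow>\<^sub>C real)" where
  "weighted_picard_map f a b K y0 u = Bcontfun (ext_cont (\<lambda>t.
     (y0 + integral {a..t} (\<lambda>s. f s (exp (2 * K * (s - a)) * u s))) / exp (2 * K * (t - a))) a b)"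

context
  fixes f :: "real \<Rightarrow> real \<Rightarrow> real" and a b K y0 :: real
  assumes a_le_b: "a \<le> b" and K_pos: "K > 0"
    and cont: "continuous_on ({a..b} \<times> UNIV) (\<lambda>(t, x). f t x)"
    and lip: "\<And>t. t \<in> {a..b} \<Longrightarrow> K-lipschitz_on UNIV (f t)"
begin

lemma continuous_on_picard_integral:
  assumes "continuous_on {a..b} y"
  shows "continuous_on {a..b} (\<lambda>t. y0 + integral {a..t} (\<lambda>s. f s (y s)))"
proof -
  have "continuous_on {a..b} (\<lambda>s. f s (y s))"
    by (rule continuous_on_compose_Pair[OF cont assms]) auto
  then show ?thesis
    by (intro continuous_on_add continuous_on_const indefinite_integral_continuous_1
        integrable_continuous_interval)
qed

lemma apply_weighted_picard_map:
  "apply_bcontfun (weighted_picard_map f a b K y0 u) = ext_cont (\<lambda>t.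
     (y0 + integral {a..t} (\<lambda>s. f s (exp (2 * K * (s - a)) * u s))) / exp (2 * K * (t - a))) a b"
  unfolding weighted_picard_map_def
proof (intro Bcontfun_inverse ext_cont_in_bcontfun continuous_on_divide)
  show "continuous_on {a..b} (\<lambda>t. y0 + integral {a..t} (\<lambda>s. f s (exp (2 * K * (s - a)) * u s)))"
    by (intro continuous_on_picard_integral continuous_intros continuous_on_apply_bcontfun)
qed (auto intro!: continuous_intros)

lemma weighted_picard_map_contraction:
  "dist (weighted_picard_map f a b K y0 u) (weighted_picard_map f a b K y0 v) \<le> 1/2 * dist u v"
proof (rule dist_bound)
  fix t
  define x where "x = clamp a b t"
  let ?w = "\<lambda>s. exp (2 * K * (s - a))"
  have x: "x \<in> {a..b}"
    using clamp_in_interval[of a b t] a_le_b by (simp add: x_def)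
  have integrable: "(\<lambda>s. f s (?w s * apply_bcontfun u s)) integrable_on {a..x}" for u
  proof (rule integrable_continuous_interval)
    have "continuous_on {a..x} (\<lambda>s. ?w s * apply_bcontfun u s)"
      by (intro continuous_intros continuous_on_apply_bcontfun)
    moreover have "{a..x} \<times> UNIV \<subseteq> {a..b} \<times> UNIV"
      using x by auto
    ultimately show "continuous_on {a..x} (\<lambda>s. f s (?w s * apply_bcontfun u s))"
      using continuous_on_compose_Pair[OF continuous_on_subset[OF cont]] by blast
  qed
  have "integral {a..x} (\<lambda>s. f s (?w s * u s)) - integral {a..x} (\<lambda>s. f s (?w s * v s))
      = integral {a..x} (\<lambda>s. f s (?w s * u s) - f s (?w s * v s))"
    by (rule integral_diff[symmetric]) (rule integrable)+
  also have "\<bar>\<dots>\<bar> \<le> dist u v / 2 * ?w x"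
  proof (rule integral_le_exp_weight[OF K_pos])
    fix s assume s: "s \<in> {a..x}"
    have "\<bar>f s (?w s * u s) - f s (?w s * v s)\<bar> \<le> K * \<bar>?w s * u s - ?w s * v s\<bar>"
      using lipschitz_onD[OF lip, of s] s x by (simp add: dist_real_def)
    also have "\<dots> = K * ?w s * dist (u s) (v s)"
      by (simp add: dist_real_def abs_mult right_diff_distrib[symmetric])
    also have "\<dots> \<le> K * dist u v * ?w s"
      using K_pos dist_bounded[of u s v] by (simp add: mult_left_mono mult.commute)
    finally show "\<bar>f s (?w s * u s) - f s (?w s * v s)\<bar> \<le> K * dist u v * ?w s" .
  qed (use x integrable_diff[OF integrable integrable] in auto)
  finally have "\<bar>integral {a..x} (\<lambda>s. f s (?w s * u s)) - integral {a..x} (\<lambda>s. f s (?w s * v s))\<bar>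
      / ?w x \<le> 1/2 * dist u v"
    by (simp add: divide_le_eq)
  moreover have "(y0 + p) / ?w x - (y0 + q) / ?w x = (p - q) / ?w x" for p q
    by (simp add: add_divide_distrib diff_divide_distrib)
  ultimately show "dist (weighted_picard_map f a b K y0 u t) (weighted_picard_map f a b K y0 v t)
      \<le> 1/2 * dist u v"
    by (simp add: apply_weighted_picard_map ext_cont_def x_def[symmetric] dist_real_def)
qed

lemma integral_solution_of_fixed_point:
  assumes "weighted_picard_map f a b K y0 u = u"
  shows "integral_solution f a y0 b (\<lambda>t. exp (2 * K * (t - a)) * u t)"
  unfolding integral_solution_def
proof (intro conjI ballI)
  let ?w = "\<lambda>s. exp (2 * K * (s - a))"
  show "continuous_on {a..b} (\<lambda>t. ?w t * u t)"
    by (intro continuous_intros continuous_on_apply_bcontfun)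
  fix t assume "t \<in> {a..b}"
  then have "weighted_picard_map f a b K y0 u t = (y0 + integral {a..t} (\<lambda>s. f s (?w s * u s))) / ?w t"
    by (simp add: apply_weighted_picard_map cbox_interval)
  then have "u t = (y0 + integral {a..t} (\<lambda>s. f s (?w s * u s))) / ?w t"
    by (simp only: assms)
  then show "?w t * u t = y0 + integral {a..t} (\<lambda>s. f s (?w s * u s))"
    by simp
qed

lemma fixed_point_of_integral_solution:
  assumes z: "integral_solution f a y0 b z"
  shows "\<exists>v. weighted_picard_map f a b K y0 v = v \<and> (\<forall>t\<in>{a..b}. z t = exp (2 * K * (t - a)) * v t)"
proof (intro exI conjI)
  let ?w = "\<lambda>s. exp (2 * K * (s - a))"
  define v where "v = Bcontfun (ext_cont (\<lambda>t. z t / ?w t) a b)"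
  have v: "apply_bcontfun v = ext_cont (\<lambda>t. z t / ?w t) a b"
    unfolding v_def using z
    by (intro Bcontfun_inverse ext_cont_in_bcontfun continuous_on_divide)
      (auto simp: integral_solution_def intro!: continuous_intros)
  show zv: "\<forall>t\<in>{a..b}. z t = ?w t * v t"
    by (simp add: v cbox_interval)
  show "weighted_picard_map f a b K y0 v = v"
  proof (rule bcontfun_eqI)
    fix s
    define x where "x = clamp a b s"
    have x: "x \<in> {a..b}"
      using clamp_in_interval[of a b s] a_le_b by (simp add: x_def)
    have "integral {a..x} (\<lambda>s. f s (?w s * v s)) = integral {a..x} (\<lambda>s. f s (z s))"
      by (rule integral_cong) (use zv x in auto)
    then show "weighted_picard_map f a b K y0 v s = v s"
      using z x by (simp add: apply_weighted_picard_map v ext_cont_def x_def[symmetric]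
          integral_solution_def)
  qed
qed

lemma integral_solution_exists_unique:
  "\<exists>y. integral_solution f a y0 b y \<and> (\<forall>z. integral_solution f a y0 b z \<longrightarrow> (\<forall>t\<in>{a..b}. z t = y t))"
proof -
  have "\<exists>!u. weighted_picard_map f a b K y0 u = u"
    using weighted_picard_map_contraction by (intro banach_fix_type[of "1/2"]) auto
  then obtain u where u: "weighted_picard_map f a b K y0 u = u"
    and unique: "\<And>v. weighted_picard_map f a b K y0 v = v \<Longrightarrow> v = u"
    by blast
  show ?thesis
  proof (intro exI conjI allI impI ballI)
    show "integral_solution f a y0 b (\<lambda>t. exp (2 * K * (t - a)) * u t)"
      using u by (rule integral_solution_of_fixed_point)
    fix z t assume "integral_solution f a y0 b z" "t \<in> {a..b}"
    then show "z t = exp (2 * K * (t - a)) * u t"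
      using fixed_point_of_integral_solution unique by blast
  qed
qed

end

lemma integral_solution_restrict:
  "integral_solution f a y0 b y \<Longrightarrow> b' \<le> b \<Longrightarrow> integral_solution f a y0 b' y"
  unfolding integral_solution_def by (auto intro: continuous_on_subset)

lemma integral_solution_has_real_derivative:
  assumes sol: "integral_solution f a y0 b y"
    and cont: "continuous_on ({a..b} \<times> UNIV) (\<lambda>(t, x). f t x)"
    and t: "t \<in> {a<..<b}"
  shows "(y has_real_derivative f t (y t)) (at t)"
proof -
  let ?Y = "\<lambda>s. y0 + integral {a..s} (\<lambda>s. f s (y s))"
  have "continuous_on {a..b} (\<lambda>s. f s (y s))"
    using sol by (intro continuous_on_compose_Pair[OF cont]) (auto simp: integral_solution_def)
  then have "(?Y has_real_derivative f t (y t)) (at t within {a..b})"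
    using t by (auto intro!: derivative_eq_intros integral_has_real_derivative)
  then have "(?Y has_real_derivative f t (y t)) (at t within {a<..<b})"
    by (rule has_field_derivative_subset) auto
  then have "(?Y has_real_derivative f t (y t)) (at t)"
    using at_within_open[of t "{a<..<b}"] t by simp
  then show ?thesis
    by (rule has_field_derivative_transform_within_open[of _ _ _ "{a<..<b}"])
      (use t sol in \<open>auto simp: integral_solution_def\<close>)
qed

lemma integral_solution_cong:
  assumes "integral_solution f a y0 b z" "\<And>t. t \<in> {a..b} \<Longrightarrow> y t = z t"
  shows "integral_solution f a y0 b y"
  unfolding integral_solution_def
proof (intro conjI ballI)
  have "continuous_on {a..b} z"
    using assms(1) by (simp add: integral_solution_def)
  then show "continuous_on {a..b} y"
    by (rule continuous_on_eq) (simp add: assms(2))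
  fix t assume "t \<in> {a..b}"
  moreover have "integral {a..t} (\<lambda>s. f s (y s)) = integral {a..t} (\<lambda>s. f s (z s))"
    using \<open>t \<in> {a..b}\<close> assms(2) by (intro integral_cong) auto
  ultimately show "y t = y0 + integral {a..t} (\<lambda>s. f s (y s))"
    using assms by (simp add: integral_solution_def)
qed

lemma integral_solution_on_halfline:
  fixes f :: "real \<Rightarrow> real \<Rightarrow> real"
  assumes cont: "continuous_on ({a..} \<times> UNIV) (\<lambda>(t, x). f t x)"
    and lip: "\<And>b. \<exists>L. \<forall>t\<in>{a..b}. L-lipschitz_on UNIV (f t)"
  shows "\<exists>y. \<forall>b. integral_solution f a y0 b y"
proof -
  have "\<exists>y. integral_solution f a y0 (a + real k) y
      \<and> (\<forall>z. integral_solution f a y0 (a + real k) z \<longrightarrow> (\<forall>t\<in>{a..a + real k}. z t = y t))"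
    for k :: nat
  proof -
    obtain L where L: "\<forall>t\<in>{a..a + real k}. L-lipschitz_on UNIV (f t)"
      using lip by blast
    have "(max L 1)-lipschitz_on UNIV (f t)" if "t \<in> {a..a + real k}" for t
      using lipschitz_on_le[of L UNIV "f t" "max L 1"] L that by simp
    moreover have "continuous_on ({a..a + real k} \<times> UNIV) (\<lambda>(t, x). f t x)"
      by (rule continuous_on_subset[OF cont]) auto
    ultimately show ?thesis
      by (intro integral_solution_exists_unique) auto
  qed
  from choice[OF allI[OF this]] obtain Y where Y_all: "\<forall>k. integral_solution f a y0 (a + real k) (Y k)
      \<and> (\<forall>z. integral_solution f a y0 (a + real k) z \<longrightarrow> (\<forall>t\<in>{a..a + real k}. z t = Y k t))" ..
  have Y: "integral_solution f a y0 (a + real k) (Y k)" for k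
    using Y_all by simp
  have Y_unique: "z t = Y k t" if "integral_solution f a y0 (a + real k) z" "t \<in> {a..a + real k}" for k z t
    using Y_all that by simp
  define y where "y t = Y (nat \<lceil>t - a\<rceil>) t" for t
  have y_eq: "y t = Y k t" if t: "t \<in> {a..a + real k}" for k t
  proof -
    define m where "m = nat \<lceil>t - a\<rceil>"
    have "t \<in> {a..a + real m}"
      using t by (auto simp: m_def) linarith
    then have "Y (max m k) t = Y m t" "Y (max m k) t = Y k t"
      using t by (auto intro!: Y_unique integral_solution_restrict[OF Y[of "max m k"]])
    then show ?thesis
      by (simp add: y_def m_def)
  qed
  have "integral_solution f a y0 b y" for b
  proof (rule integral_solution_restrict)
    show "integral_solution f a y0 (a + real (nat \<lceil>b - a\<rceil>)) y"
      using y_eq by (intro integral_solution_cong[OF Y]) auto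
  qed linarith
  then show ?thesis
    by blast
qed

lemma global_solution_exists:
  fixes f :: "real \<Rightarrow> real \<Rightarrow> real"
  assumes cont: "continuous_on ({a..} \<times> UNIV) (\<lambda>(t, x). f t x)"
    and lip: "\<And>b. \<exists>L. \<forall>t\<in>{a..b}. L-lipschitz_on UNIV (f t)"
  shows "\<exists>y. y a = y0 \<and> continuous_on {a..} y \<and> (\<forall>t>a. (y has_real_derivative f t (y t)) (at t))"
proof -
  obtain y where y: "\<And>b. integral_solution f a y0 b y"
    using integral_solution_on_halfline[OF cont lip] by blast
  have deriv: "(y has_real_derivative f t (y t)) (at t)" if "t > a" for t
  proof (rule integral_solution_has_real_derivative[OF y])
    show "continuous_on ({a..t + 1} \<times> UNIV) (\<lambda>(t, x). f t x)"
      by (rule continuous_on_subset[OF cont]) auto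
  qed (use that in simp)
  have "continuous_on {a..a + 1} y"
    using y by (simp add: integral_solution_def)
  moreover have "continuous_on {a + 1..} y"
    using deriv DERIV_isCont by (force intro: continuous_at_imp_continuous_on)
  ultimately have "continuous_on ({a..a + 1} \<union> {a + 1..}) y"
    by (intro continuous_on_closed_Un) auto
  moreover have "{a..a + 1} \<union> {a + 1..} = {a..}"
    by auto
  moreover have "y a = y0"
    using y[of a] by (simp add: integral_solution_def)
  ultimately show ?thesis
    using deriv by auto
qed

section \<open>Solutions trapped between barriers\<close>

lemma pos_if_DERIV_pos_where_nonpos:
  fixes g :: "real \<Rightarrow> real"
  assumes cont: "continuous_on {a..} g" and start: "g a > 0"
    and crossing: "\<And>t. t > a \<Longrightarrow> g t \<le> 0 \<Longrightarrow> \<exists>d. (g has_real_derivative d) (at t) \<and> d > 0"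
    and "t \<ge> a"
  shows "g t > 0"
proof (rule ccontr)
  assume "\<not> g t > 0"
  define Z where "Z = {a..} \<inter> g -` {..0}"
  have "closed Z"
    unfolding Z_def by (intro continuous_closed_preimage[OF cont]) auto
  moreover have "t \<in> Z" "bdd_below Z"
    using \<open>t \<ge> a\<close> \<open>\<not> g t > 0\<close> by (auto simp: Z_def intro: bdd_belowI[of _ a])
  moreover define T where "T = Inf Z"
  ultimately have "T \<in> Z"
    by (auto intro: closed_contains_Inf)
  then have T: "T > a" "g T \<le> 0"
    using start by (auto simp: Z_def order.order_iff_strict)
  obtain d where "(g has_real_derivative d) (at T)" "d > 0"
    using crossing[OF T] by blast
  then obtain e where e: "e > 0" "\<And>h. h > 0 \<Longrightarrow> h < e \<Longrightarrow> g (T - h) < g T"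
    using DERIV_pos_inc_left by blast
  define h where "h = min e (T - a) / 2"
  have h: "h > 0" "h < e" "h \<le> T - a"
    using e(1) T(1) by (auto simp: h_def)
  then have "T - h \<in> Z"
    using e(2)[OF h(1,2)] T by (auto simp: Z_def)
  then have "T \<le> T - h"
    unfolding T_def using \<open>bdd_below Z\<close> by (rule cInf_lower)
  then show False
    using h(1) by simp
qed

lemma lipschitz_on_clamped:
  fixes g :: "real \<Rightarrow> real"
  assumes g: "L-lipschitz_on {p..q} g" and "p \<le> lo" "lo \<le> hi" "hi \<le> q"
  shows "L-lipschitz_on UNIV (\<lambda>S. g (max lo (min hi S)))"
proof -
  have "1-lipschitz_on UNIV (\<lambda>S. max lo (min hi S))"
    by (rule lipschitz_onI) (auto simp: dist_real_def max_def min_def abs_if)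
  moreover have "(\<lambda>S. max lo (min hi S)) ` UNIV \<subseteq> {p..q}"
    using assms(2-4) by auto
  then have "L-lipschitz_on ((\<lambda>S. max lo (min hi S)) ` UNIV) g"
    using g by (rule lipschitz_on_subset[rotated])
  ultimately show ?thesis
    using lipschitz_on_compose2 by fastforce
qed

lemma clamped_solution_exists:
  fixes f :: "real \<Rightarrow> real \<Rightarrow> real" and lo hi :: "real \<Rightarrow> real" and r0 s0 :: real
  assumes cont: "continuous_on ({r0..} \<times> {0<..<1}) (\<lambda>(r, S). f r S)"
    and lip: "\<And>b p q. 0 < p \<Longrightarrow> q < 1 \<Longrightarrow> \<exists>L. \<forall>r\<in>{r0..b}. L-lipschitz_on {p..q} (f r)"
    and range: "\<And>r. 0 < lo r" "\<And>r. hi r < 1" "\<And>r. r \<ge> r0 \<Longrightarrow> lo r \<le> hi r"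
    and mono: "\<And>r r'. r0 \<le> r \<Longrightarrow> r \<le> r' \<Longrightarrow> lo r' \<le> lo r \<and> hi r \<le> hi r'"
    and lo_cont: "continuous_on UNIV lo" and hi_cont: "continuous_on UNIV hi"
  shows "\<exists>y. y r0 = s0 \<and> continuous_on {r0..} y
     \<and> (\<forall>t>r0. (y has_real_derivative f t (max (lo t) (min (hi t) (y t)))) (at t))"
proof (rule global_solution_exists[where f = "\<lambda>t S. f t (max (lo t) (min (hi t) S))"])
  let ?cl = "\<lambda>p. (fst p, max (lo (fst p)) (min (hi (fst p)) (snd p)))"
  have "continuous_on ({r0..} \<times> UNIV) (\<lambda>p. lo (fst p))" "continuous_on ({r0..} \<times> UNIV) (\<lambda>p. hi (fst p))"
    by (auto intro: continuous_on_compose2[OF lo_cont continuous_on_fst]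
        continuous_on_compose2[OF hi_cont continuous_on_fst])
  then have "continuous_on ({r0..} \<times> UNIV) ?cl"
    by (intro continuous_on_Pair continuous_on_fst continuous_on_snd continuous_on_max
        continuous_on_min continuous_on_id)
  moreover have "?cl ` ({r0..} \<times> UNIV) \<subseteq> {r0..} \<times> {0<..<1}"
  proof -
    have "0 < max (lo r) (min (hi r) S) \<and> max (lo r) (min (hi r) S) < 1" if "r0 \<le> r" for r S
      using range(1,2)[of r] range(3)[OF that] by (auto simp: max_def min_def)
    then show ?thesis
      by auto
  qed
  ultimately have "continuous_on ({r0..} \<times> UNIV) (\<lambda>p. (\<lambda>(r, S). f r S) (?cl p))"
    by (rule continuous_on_compose2[OF cont])
  then show "continuous_on ({r0..} \<times> UNIV) (\<lambda>(t, S). f t (max (lo t) (min (hi t) S)))"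
    by (simp add: case_prod_beta)
next
  fix b
  define p where "p = lo (max b r0)"
  define q where "q = hi (max b r0)"
  have "0 < p" "q < 1"
    using range by (simp_all add: p_def q_def)
  then obtain L where L: "\<forall>r\<in>{r0..b}. L-lipschitz_on {p..q} (f r)"
    using lip by blast
  have "L-lipschitz_on UNIV (\<lambda>S. f r (max (lo r) (min (hi r) S)))" if r: "r \<in> {r0..b}" for r
    using mono[of r "max b r0"] r range(3)[of r] L
    by (intro lipschitz_on_clamped) (auto simp: p_def q_def)
  then show "\<exists>L. \<forall>t\<in>{r0..b}. L-lipschitz_on UNIV (\<lambda>S. f t (max (lo t) (min (hi t) S)))"
    by blast
qed

lemma solution_between_barriers:
  fixes f :: "real \<Rightarrow> real \<Rightarrow> real" and lo hi lo' hi' :: "real \<Rightarrow> real" and r0 s0 :: real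
  assumes cont: "continuous_on ({r0..} \<times> {0<..<1}) (\<lambda>(r, S). f r S)"
    and lip: "\<And>b p q. 0 < p \<Longrightarrow> q < 1 \<Longrightarrow> \<exists>L. \<forall>r\<in>{r0..b}. L-lipschitz_on {p..q} (f r)"
    and range: "\<And>r. 0 < lo r" "\<And>r. hi r < 1" "\<And>r. r \<ge> r0 \<Longrightarrow> lo r \<le> hi r"
    and mono: "\<And>r r'. r0 \<le> r \<Longrightarrow> r \<le> r' \<Longrightarrow> lo r' \<le> lo r \<and> hi r \<le> hi r'"
    and lo_deriv: "\<And>r. (lo has_real_derivative lo' r) (at r)"
    and hi_deriv: "\<And>r. (hi has_real_derivative hi' r) (at r)"
    and lower: "\<And>r. r > r0 \<Longrightarrow> lo' r < f r (lo r)"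
    and upper: "\<And>r. r > r0 \<Longrightarrow> f r (hi r) < hi' r"
    and s0: "lo r0 < s0" "s0 < hi r0"
  shows "\<exists>S. S r0 = s0 \<and> continuous_on {r0..} S \<and> (\<forall>r\<ge>r0. lo r < S r \<and> S r < hi r)
     \<and> (\<forall>r>r0. (S has_real_derivative f r (S r)) (at r))"
proof -
  have lo_cont: "continuous_on A lo" and hi_cont: "continuous_on A hi" for A
    using lo_deriv hi_deriv DERIV_isCont by (blast intro: continuous_at_imp_continuous_on)+
  obtain y where y0: "y r0 = s0" and y_cont: "continuous_on {r0..} y"
    and y_deriv: "\<And>t. t > r0 \<Longrightarrow> (y has_real_derivative f t (max (lo t) (min (hi t) (y t)))) (at t)"
    using clamped_solution_exists[OF cont lip range mono lo_cont hi_cont] by blast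
  have above: "y t - lo t > 0" if "t \<ge> r0" for t
  proof (rule pos_if_DERIV_pos_where_nonpos[OF _ _ _ that])
    show "continuous_on {r0..} (\<lambda>t. y t - lo t)"
      by (intro continuous_on_diff y_cont lo_cont)
    show "y r0 - lo r0 > 0"
      using y0 s0 by simp
    fix t assume t: "t > r0" "y t - lo t \<le> 0"
    then have "max (lo t) (min (hi t) (y t)) = lo t"
      using range(3)[of t] by (simp add: max_def min_def)
    then have "f t (max (lo t) (min (hi t) (y t))) - lo' t > 0"
      using lower[OF t(1)] by simp
    then show "\<exists>d. ((\<lambda>t. y t - lo t) has_real_derivative d) (at t) \<and> d > 0"
      using DERIV_diff[OF y_deriv[OF t(1)] lo_deriv] by blast
  qed
  have below: "hi t - y t > 0" if "t \<ge> r0" for t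
  proof (rule pos_if_DERIV_pos_where_nonpos[OF _ _ _ that])
    show "continuous_on {r0..} (\<lambda>t. hi t - y t)"
      by (intro continuous_on_diff y_cont hi_cont)
    show "hi r0 - y r0 > 0"
      using y0 s0 by simp
    fix t assume t: "t > r0" "hi t - y t \<le> 0"
    then have "max (lo t) (min (hi t) (y t)) = hi t"
      using range(3)[of t] by (simp add: max_def min_def)
    then have "hi' t - f t (max (lo t) (min (hi t) (y t))) > 0"
      using upper[OF t(1)] by simp
    then show "\<exists>d. ((\<lambda>t. hi t - y t) has_real_derivative d) (at t) \<and> d > 0"
      using DERIV_diff[OF hi_deriv y_deriv[OF t(1)]] by blast
  qed
  have "max (lo t) (min (hi t) (y t)) = y t" if "t \<ge> r0" for t
    using above[OF that] below[OF that] by simp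
  then have "\<forall>t>r0. (y has_real_derivative f t (y t)) (at t)"
    using y_deriv by (metis less_imp_le)
  moreover have "\<forall>t\<ge>r0. lo t < y t \<and> y t < hi t"
    using above below by simp
  ultimately show ?thesis
    using y0 y_cont by blast
qed

lemma unit_interval_invariant_solution:
  fixes f :: "real \<Rightarrow> real \<Rightarrow> real" and C r0 s0 :: real
  assumes cont: "continuous_on ({r0..} \<times> {0<..<1}) (\<lambda>(r, S). f r S)"
    and lip: "\<And>b p q. 0 < p \<Longrightarrow> q < 1 \<Longrightarrow> \<exists>L. \<forall>r\<in>{r0..b}. L-lipschitz_on {p..q} (f r)"
    and low: "\<forall>\<^sub>F S in at_right 0. \<forall>r\<ge>r0. - C * S \<le> f r S"
    and up: "\<forall>\<^sub>F S in at_left 1. \<forall>r\<ge>r0. f r S \<le> C * (1 - S)"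
    and s0: "0 < s0" "s0 < 1"
  shows "\<exists>S. S r0 = s0 \<and> continuous_on {r0..} S \<and> (\<forall>r\<ge>r0. 0 < S r \<and> S r < 1)
     \<and> (\<forall>r>r0. (S has_real_derivative f r (S r)) (at r))"
proof -
  obtain sl where sl: "0 < sl" "\<And>S r. 0 < S \<Longrightarrow> S < sl \<Longrightarrow> r \<ge> r0 \<Longrightarrow> - C * S \<le> f r S"
    using low unfolding eventually_at_right_field by auto
  obtain su where su: "su < 1" "\<And>S r. su < S \<Longrightarrow> S < 1 \<Longrightarrow> r \<ge> r0 \<Longrightarrow> f r S \<le> C * (1 - S)"
    using up unfolding eventually_at_left_field by auto
  define K where "K = \<bar>C\<bar> + 1"
  define d0 where "d0 = min sl s0 / 2"
  define e0 where "e0 = min (1 - su) (1 - s0) / 2"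
  define \<delta> where "\<delta> r = d0 * exp (- 2 * K * (r - r0))" for r
  define \<epsilon> where "\<epsilon> r = e0 * exp (- 2 * K * (r - r0))" for r
  have K: "0 < K" "C < K"
    by (auto simp: K_def)
  have d0: "0 < d0" "d0 < sl" "d0 < s0"
    using sl s0 by (auto simp: d0_def)
  have e0: "0 < e0" "su < 1 - e0" "e0 < 1 - s0"
    using su s0 by (auto simp: e0_def min_def field_simps)
  have \<delta>_pos: "0 < \<delta> r" and \<epsilon>_pos: "0 < \<epsilon> r" for r
    using d0 e0 by (auto simp: \<delta>_def \<epsilon>_def)
  have \<delta>_anti: "\<delta> r' \<le> \<delta> r" and \<epsilon>_anti: "\<epsilon> r' \<le> \<epsilon> r" if "r \<le> r'" for r r'
    using that K d0 e0 by (auto simp: \<delta>_def \<epsilon>_def)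
  have \<delta>_le: "\<delta> r \<le> d0" and \<epsilon>_le: "\<epsilon> r \<le> e0" if "r \<ge> r0" for r
    using \<delta>_anti[OF that] \<epsilon>_anti[OF that] by (simp_all add: \<delta>_def \<epsilon>_def)
  have "\<exists>S. S r0 = s0 \<and> continuous_on {r0..} S \<and> (\<forall>r\<ge>r0. \<delta> r < S r \<and> S r < 1 - \<epsilon> r)
     \<and> (\<forall>r>r0. (S has_real_derivative f r (S r)) (at r))"
  proof (rule solution_between_barriers[of r0 f \<delta> "\<lambda>r. 1 - \<epsilon> r" "\<lambda>r. - 2 * K * \<delta> r"
        "\<lambda>r. 2 * K * \<epsilon> r", OF cont lip])
    fix r assume "r > r0"
    then have "- C * \<delta> r \<le> f r (\<delta> r)" "f r (1 - \<epsilon> r) \<le> C * \<epsilon> r"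
      using sl(2)[of "\<delta> r" r] su(2)[of "1 - \<epsilon> r" r] \<delta>_pos \<epsilon>_pos \<delta>_le[of r] \<epsilon>_le[of r] d0 e0
      by auto
    moreover have "C * \<delta> r < K * \<delta> r" "C * \<epsilon> r < K * \<epsilon> r" "0 < K * \<delta> r" "0 < K * \<epsilon> r"
      using K \<delta>_pos[of r] \<epsilon>_pos[of r] by (auto intro: mult_strict_right_mono)
    ultimately show "- 2 * K * \<delta> r < f r (\<delta> r)" "f r (1 - \<epsilon> r) < 2 * K * \<epsilon> r"
      by linarith+
  next
    show "(\<delta> has_real_derivative - 2 * K * \<delta> r) (at r)"
      and "((\<lambda>r. 1 - \<epsilon> r) has_real_derivative 2 * K * \<epsilon> r) (at r)" for r
      unfolding \<delta>_def \<epsilon>_def by (auto intro!: derivative_eq_intros)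
  next
    show "\<delta> r \<le> 1 - \<epsilon> r" if "r \<ge> r0" for r
      using \<delta>_le[OF that] \<epsilon>_le[OF that] by (auto simp: d0_def e0_def)
  next
    show "\<delta> r' \<le> \<delta> r \<and> 1 - \<epsilon> r \<le> 1 - \<epsilon> r'" if "r \<le> r'" for r r'
      using \<delta>_anti[OF that] \<epsilon>_anti[OF that] by simp
  next
    show "\<delta> r0 < s0" "s0 < 1 - \<epsilon> r0"
      using \<delta>_le[of r0] \<epsilon>_le[of r0] d0 e0 by simp_all
  qed (use \<delta>_pos \<epsilon>_pos in simp_all)
  then obtain S where S: "S r0 = s0" "continuous_on {r0..} S"
    "\<And>r. r \<ge> r0 \<Longrightarrow> \<delta> r < S r \<and> S r < 1 - \<epsilon> r"
    "\<And>r. r > r0 \<Longrightarrow> (S has_real_derivative f r (S r)) (at r)"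
    by blast
  have "0 < S r \<and> S r < 1" if "r \<ge> r0" for r
    using S(3)[OF that] \<delta>_pos[of r] \<epsilon>_pos[of r] by linarith
  with S show ?thesis
    by blast
qed

lemma unit_interval_solution_of_combination:
  fixes A B P Q :: "real \<Rightarrow> real" and r0 s0 :: real
  assumes A: "continuous_on {r0..} A" "\<And>r. r \<ge> r0 \<Longrightarrow> \<bar>A r\<bar> \<le> KA"
    and B: "continuous_on {r0..} B" "\<And>r. r \<ge> r0 \<Longrightarrow> \<bar>B r\<bar> \<le> KB"
    and P: "continuous_on {0<..<1} P" "\<And>p q. 0 < p \<Longrightarrow> q < 1 \<Longrightarrow> \<exists>L. L-lipschitz_on {p..q} P"
    and Q: "continuous_on {0<..<1} Q" "\<And>p q. 0 < p \<Longrightarrow> q < 1 \<Longrightarrow> \<exists>L. L-lipschitz_on {p..q} Q"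
    and low: "\<exists>C. \<forall>\<^sub>F S in at_right 0. \<forall>r\<ge>r0. - C * S \<le> A r * P S - B r * Q S"
    and up: "\<exists>C. \<forall>\<^sub>F S in at_left 1. \<forall>r\<ge>r0. - C * (1 - S) \<le> B r * Q S - A r * P S"
    and s0: "0 < s0" "s0 < 1"
  shows "\<exists>S. S r0 = s0 \<and> continuous_on {r0..} S \<and> (\<forall>r\<ge>r0. 0 < S r \<and> S r < 1)
     \<and> (\<forall>r>r0. (S has_real_derivative A r * P (S r) - B r * Q (S r)) (at r))"
proof -
  obtain C1 C2 where
    C1: "\<forall>\<^sub>F S in at_right 0. \<forall>r\<ge>r0. - C1 * S \<le> A r * P S - B r * Q S" and
    C2: "\<forall>\<^sub>F S in at_left 1. \<forall>r\<ge>r0. - C2 * (1 - S) \<le> B r * Q S - A r * P S"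
    using low up by blast
  show ?thesis
  proof (rule unit_interval_invariant_solution[where C = "max C1 C2"])
    let ?D = "{r0..} \<times> {0<..<1}"
    have "continuous_on ?D (\<lambda>x. A (fst x))" "continuous_on ?D (\<lambda>x. B (fst x))"
      "continuous_on ?D (\<lambda>x. P (snd x))" "continuous_on ?D (\<lambda>x. Q (snd x))"
      by (auto intro!: continuous_on_compose2[OF A(1) continuous_on_fst]
          continuous_on_compose2[OF B(1) continuous_on_fst]
          continuous_on_compose2[OF P(1) continuous_on_snd]
          continuous_on_compose2[OF Q(1) continuous_on_snd])
    then show "continuous_on ?D (\<lambda>(r, S). A r * P S - B r * Q S)"
      unfolding case_prod_beta by (intro continuous_on_diff continuous_on_mult)
  next
    fix b p q :: real
    assume "0 < p" "q < 1"
    then obtain LP LQ where "LP-lipschitz_on {p..q} P" "LQ-lipschitz_on {p..q} Q"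
      using P(2) Q(2) by metis
    then have "(KA * LP + KB * LQ)-lipschitz_on {p..q} (\<lambda>S. A r * P S - B r * Q S)"
      if "r \<in> {r0..b}" for r
      using that by (intro lipschitz_on_diff lipschitz_on_cmult_real_upper A(2) B(2)) auto
    then show "\<exists>L. \<forall>r\<in>{r0..b}. L-lipschitz_on {p..q} (\<lambda>S. A r * P S - B r * Q S)"
      by blast
  next
    show "\<forall>\<^sub>F S in at_right 0. \<forall>r\<ge>r0. - max C1 C2 * S \<le> A r * P S - B r * Q S"
      using C1 eventually_at_right_less[of 0]
    proof eventually_elim
      case (elim S)
      then have "- max C1 C2 * S \<le> - C1 * S"
        by (intro mult_right_mono) auto
      then show ?case
        using elim(1) by (blast intro: order_trans)
    qed
    show "\<forall>\<^sub>F S in at_left 1. \<forall>r\<ge>r0. A r * P S - B r * Q S \<le> max C1 C2 * (1 - S)"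
      using C2 eventually_at_left_real[of 0 1, OF zero_less_one]
    proof eventually_elim
      case (elim S)
      then have "C2 * (1 - S) \<le> max C1 C2 * (1 - S)"
        by (intro mult_right_mono) auto
      then show ?case
        using elim(1) by force
    qed
  qed (use s0 in auto)
qed

section \<open>Linear bounds near the endpoints\<close>

lemma eventually_le_linear_at_right_0:
  fixes F :: "real \<Rightarrow> real"
  assumes diff: "\<And>x. x \<in> {0<..<1} \<Longrightarrow> F differentiable (at x)"
    and lim: "(F \<longlongrightarrow> 0) (at_right 0)"
    and bound: "Limsup (at_right 0) (\<lambda>S. ereal (deriv F S)) < \<infinity>"
  shows "\<exists>K. \<forall>\<^sub>F S in at_right 0. F S \<le> K * S"
proof -
  obtain m :: nat where "Limsup (at_right 0) (\<lambda>S. ereal (deriv F S)) < ereal (real m)"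
    using bound less_PInf_Ex_of_nat by auto
  then have "\<forall>\<^sub>F S in at_right 0. ereal (deriv F S) < ereal (real m)"
    by (rule Limsup_lessD)
  then obtain b0 where b0: "0 < b0" "\<And>S. 0 < S \<Longrightarrow> S < b0 \<Longrightarrow> deriv F S < real m"
    unfolding eventually_at_right_field by auto
  define b where "b = min b0 1"
  have b: "0 < b" "b \<le> 1" "\<And>S. 0 < S \<Longrightarrow> S < b \<Longrightarrow> deriv F S < real m"
    using b0 by (auto simp: b_def)
  have "F S \<le> real m * S" if S: "0 < S" "S < b" for S
  proof -
    have "\<forall>\<^sub>F e in at_right 0. F S - real m * S \<le> F e"
      unfolding eventually_at_right_field
    proof (intro exI conjI allI impI)
      fix e assume e: "0 < e" "e < S"
      have "(F has_real_derivative deriv F x) (at x)" if "e \<le> x" "x \<le> S" for x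
        using diff[of x] that e S b by (simp add: DERIV_deriv_iff_real_differentiable)
      then obtain z where z: "e < z" "z < S" "F S - F e = (S - e) * deriv F z"
        using MVT2[OF e(2)] by blast
      have "(S - e) * deriv F z \<le> (S - e) * real m"
        using b(3)[of z] z e S by (intro mult_left_mono) auto
      also have "\<dots> \<le> S * real m"
        using e by (intro mult_right_mono) auto
      finally show "F S - real m * S \<le> F e"
        using z(3) by (simp add: mult.commute)
    qed (use S in auto)
    from tendsto_lowerbound[OF lim this] show ?thesis
      by simp
  qed
  then show ?thesis
    unfolding eventually_at_right_field using b by blast
qed

lemma eventually_le_linear_at_left_1:
  fixes F :: "real \<Rightarrow> real"
  assumes diff: "\<And>x. x \<in> {0<..<1} \<Longrightarrow> F differentiable (at x)"
    and lim: "(F \<longlongrightarrow> 0) (at_left 1)"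
    and bound: "Liminf (at_left 1) (\<lambda>S. ereal (deriv F S)) > - \<infinity>"
  shows "\<exists>K. \<forall>\<^sub>F S in at_left 1. F S \<le> K * (1 - S)"
proof -
  obtain m :: nat where "ereal (- real m) < Liminf (at_left 1) (\<lambda>S. ereal (deriv F S))"
  proof (cases "Liminf (at_left 1) (\<lambda>S. ereal (deriv F S))")
    case (real r)
    moreover obtain m :: nat where "- r < real m"
      using reals_Archimedean2 by blast
    ultimately show ?thesis
      using that[of m] by auto
  qed (use bound that[of 0] in auto)
  then have "\<forall>\<^sub>F S in at_left 1. ereal (- real m) < ereal (deriv F S)"
    by (rule less_LiminfD)
  then obtain b0 where b0: "b0 < 1" "\<And>S. b0 < S \<Longrightarrow> S < 1 \<Longrightarrow> - real m < deriv F S"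
    unfolding eventually_at_left_field by auto
  define b where "b = max b0 0"
  have b: "0 \<le> b" "b < 1" "\<And>S. b < S \<Longrightarrow> S < 1 \<Longrightarrow> - real m < deriv F S"
    using b0 by (auto simp: b_def)
  have "F S \<le> real m * (1 - S)" if S: "b < S" "S < 1" for S
  proof -
    have "\<forall>\<^sub>F e in at_left 1. F S - real m * (1 - S) \<le> F e"
      unfolding eventually_at_left_field
    proof (intro exI conjI allI impI)
      fix e assume e: "S < e" "e < 1"
      have "(F has_real_derivative deriv F x) (at x)" if "S \<le> x" "x \<le> e" for x
        using diff[of x] that e S b by (simp add: DERIV_deriv_iff_real_differentiable)
      then obtain z where z: "S < z" "z < e" "F e - F S = (e - S) * deriv F z"
        using MVT2[OF e(1)] by blast
      have "(e - S) * (- real m) \<le> (e - S) * deriv F z"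
        using b(3)[of z] z e S by (intro mult_left_mono) auto
      moreover have "(1 - S) * (- real m) \<le> (e - S) * (- real m)"
        using e by (intro mult_right_mono_neg) auto
      ultimately show "F S - real m * (1 - S) \<le> F e"
        using z(3) by (simp add: algebra_simps)
    qed (use S in auto)
    from tendsto_lowerbound[OF lim this] show ?thesis
      by simp
  qed
  then show ?thesis
    unfolding eventually_at_left_field using b by blast
qed

lemma eventually_lower_bound_term:
  fixes A P d :: "real \<Rightarrow> real" and F :: "real filter"
  assumes A_bound: "\<And>r. r \<ge> r0 \<Longrightarrow> \<bar>A r\<bar> \<le> KA"
    and nonneg: "\<forall>\<^sub>F S in F. 0 \<le> P S \<and> 0 \<le> d S"
    and A_or_P: "(\<forall>r\<ge>r0. 0 \<le> A r) \<or> (\<exists>K. \<forall>\<^sub>F S in F. P S \<le> K * d S)"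
  shows "\<exists>C. \<forall>\<^sub>F S in F. \<forall>r\<ge>r0. - C * d S \<le> A r * P S"
  using A_or_P
proof
  assume "\<forall>r\<ge>r0. 0 \<le> A r"
  then have "\<forall>\<^sub>F S in F. \<forall>r\<ge>r0. - 0 * d S \<le> A r * P S"
    using nonneg by (auto elim: eventually_mono)
  then show ?thesis ..
next
  assume "\<exists>K. \<forall>\<^sub>F S in F. P S \<le> K * d S"
  then obtain K where K: "\<forall>\<^sub>F S in F. P S \<le> K * d S" ..
  have "0 \<le> KA"
    using A_bound[of r0] by simp
  have "\<forall>\<^sub>F S in F. \<forall>r\<ge>r0. - (KA * K) * d S \<le> A r * P S"
    using K nonneg
  proof eventually_elim
    case (elim S)
    show ?case
    proof (intro allI impI)
      fix r assume "r \<ge> r0"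
      have "- (A r * P S) \<le> \<bar>A r\<bar> * P S"
        using mult_right_mono[of "- A r" "\<bar>A r\<bar>" "P S"] elim by simp
      also have "\<dots> \<le> KA * P S"
        using A_bound[OF \<open>r \<ge> r0\<close>] elim by (intro mult_right_mono) auto
      also have "\<dots> \<le> KA * (K * d S)"
        using elim \<open>0 \<le> KA\<close> by (intro mult_left_mono) auto
      finally show "- (KA * K) * d S \<le> A r * P S"
        by simp
    qed
  qed
  then show ?thesis ..
qed

lemma eventually_linear_lower_bound:
  fixes A B P Q d :: "real \<Rightarrow> real" and F :: "real filter"
  assumes "\<And>r. r \<ge> r0 \<Longrightarrow> \<bar>A r\<bar> \<le> KA" "\<And>r. r \<ge> r0 \<Longrightarrow> \<bar>B r\<bar> \<le> KB"
    and nonneg: "\<forall>\<^sub>F S in F. 0 \<le> P S \<and> 0 \<le> Q S \<and> 0 \<le> d S"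
    and "(\<forall>r\<ge>r0. 0 \<le> A r) \<or> (\<exists>K. \<forall>\<^sub>F S in F. P S \<le> K * d S)"
    and "(\<forall>r\<ge>r0. B r \<le> 0) \<or> (\<exists>K. \<forall>\<^sub>F S in F. Q S \<le> K * d S)"
  shows "\<exists>C. \<forall>\<^sub>F S in F. \<forall>r\<ge>r0. - C * d S \<le> A r * P S - B r * Q S"
proof -
  have P: "\<forall>\<^sub>F S in F. 0 \<le> P S \<and> 0 \<le> d S" and Q: "\<forall>\<^sub>F S in F. 0 \<le> Q S \<and> 0 \<le> d S"
    using nonneg by (auto elim: eventually_mono)
  obtain CA where CA: "\<forall>\<^sub>F S in F. \<forall>r\<ge>r0. - CA * d S \<le> A r * P S"
    using eventually_lower_bound_term[OF assms(1) P assms(4)] by blast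
  have "\<bar>- B r\<bar> \<le> KB" if "r \<ge> r0" for r
    using assms(2)[OF that] by simp
  moreover have "(\<forall>r\<ge>r0. 0 \<le> - B r) \<or> (\<exists>K. \<forall>\<^sub>F S in F. Q S \<le> K * d S)"
    using assms(5) by simp
  ultimately obtain CB where CB: "\<forall>\<^sub>F S in F. \<forall>r\<ge>r0. - CB * d S \<le> - B r * Q S"
    using eventually_lower_bound_term[of r0 "\<lambda>r. - B r" KB Q d F, OF _ Q] by blast
  have "\<forall>\<^sub>F S in F. \<forall>r\<ge>r0. - (CA + CB) * d S \<le> A r * P S - B r * Q S"
    using CA CB
  proof eventually_elim
    case (elim S)
    show ?case
    proof (intro allI impI)
      fix r assume "r \<ge> r0"
      then have "- CA * d S \<le> A r * P S" "- CB * d S \<le> - B r * Q S"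
        using elim by auto
      then show "- (CA + CB) * d S \<le> A r * P S - B r * Q S"
        by (simp add: algebra_simps)
    qed
  qed
  then show ?thesis ..
qed

lemma eventually_nonneg_if_dominated:
  fixes A B P Q :: "real \<Rightarrow> real" and F :: "real filter"
  assumes coeff: "\<And>r. r \<ge> r0 \<Longrightarrow> A r \<le> 0 \<and> B r \<le> 0 \<and> \<bar>A r\<bar> \<le> M * \<bar>B r\<bar>"
    and dom: "\<forall>\<^sub>F S in F. 0 \<le> P S \<and> M * P S \<le> Q S"
  shows "\<forall>\<^sub>F S in F. \<forall>r\<ge>r0. 0 \<le> A r * P S - B r * Q S"
  using dom
proof eventually_elim
  case (elim S)
  show ?case
  proof (intro allI impI)
    fix r assume r: "r \<ge> r0"
    have "\<bar>A r\<bar> * P S \<le> (M * \<bar>B r\<bar>) * P S"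
      using coeff[OF r] elim by (intro mult_right_mono) auto
    also have "\<dots> = \<bar>B r\<bar> * (M * P S)"
      by (simp only: mult_ac)
    also have "\<dots> \<le> \<bar>B r\<bar> * Q S"
      using elim by (intro mult_left_mono) auto
    finally show "0 \<le> A r * P S - B r * Q S"
      using coeff[OF r] by simp
  qed
qed

lemma same_sgn_iff:
  fixes x y :: real
  assumes "sgn x = sgn y"
  shows "x < 0 \<longleftrightarrow> y < 0" "0 \<le> x \<longleftrightarrow> 0 \<le> y" "x \<le> 0 \<longleftrightarrow> y \<le> 0"
  using assms by (metis sgn_less, metis zero_le_sgn_iff, metis sgn_le_0_iff)

lemma eventually_linear_lower_bound_by_signs:
  fixes A B P Q d :: "real \<Rightarrow> real" and F :: "real filter" and cA cB :: real
  assumes A: "\<And>r. r \<ge> r0 \<Longrightarrow> \<bar>A r\<bar> \<le> KA \<and> sgn (A r) = sgn cA"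
    and B: "\<And>r. r \<ge> r0 \<Longrightarrow> \<bar>B r\<bar> \<le> KB \<and> sgn (B r) = sgn cB"
    and comparable: "cA < 0 \<Longrightarrow> cB < 0 \<Longrightarrow> \<exists>M. \<forall>r\<ge>r0. \<bar>A r\<bar> \<le> M * \<bar>B r\<bar>"
    and nonneg: "\<forall>\<^sub>F S in F. 0 \<le> P S \<and> 0 \<le> Q S \<and> 0 \<le> d S"
    and dominated: "\<And>M. \<forall>\<^sub>F S in F. M * P S \<le> Q S"
    and Q_linear: "0 < cB \<Longrightarrow> \<exists>K. \<forall>\<^sub>F S in F. Q S \<le> K * d S"
    and P_linear: "cB = 0 \<Longrightarrow> cA < 0 \<Longrightarrow> \<exists>K. \<forall>\<^sub>F S in F. P S \<le> K * d S"
  shows "\<exists>C. \<forall>\<^sub>F S in F. \<forall>r\<ge>r0. - C * d S \<le> A r * P S - B r * Q S"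
proof (cases "cA < 0 \<and> cB < 0")
  case True
  then obtain M where M: "\<forall>r\<ge>r0. \<bar>A r\<bar> \<le> M * \<bar>B r\<bar>"
    using comparable by blast
  have "A r \<le> 0 \<and> B r \<le> 0 \<and> \<bar>A r\<bar> \<le> M * \<bar>B r\<bar>" if "r \<ge> r0" for r
  proof (intro conjI)
    show "A r \<le> 0" "B r \<le> 0"
      using same_sgn_iff(3) A[OF that] B[OF that] True by (metis less_imp_le)+
    show "\<bar>A r\<bar> \<le> M * \<bar>B r\<bar>"
      using M that by blast
  qed
  moreover have "\<forall>\<^sub>F S in F. 0 \<le> P S \<and> M * P S \<le> Q S"
    using nonneg dominated[of M] by eventually_elim simp
  ultimately have "\<forall>\<^sub>F S in F. \<forall>r\<ge>r0. 0 \<le> A r * P S - B r * Q S"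
    by (rule eventually_nonneg_if_dominated)
  then have "\<forall>\<^sub>F S in F. \<forall>r\<ge>r0. - 0 * d S \<le> A r * P S - B r * Q S"
    by simp
  then show ?thesis ..
next
  case False
  have "(\<forall>r\<ge>r0. 0 \<le> A r) \<or> (\<exists>K. \<forall>\<^sub>F S in F. P S \<le> K * d S)"
  proof (cases "0 \<le> cA")
    case True
    then show ?thesis
      using same_sgn_iff(2) A by blast
  next
    case False
    with \<open>\<not> (cA < 0 \<and> cB < 0)\<close> consider "0 < cB" | "cB = 0"
      by linarith
    then show ?thesis
    proof cases
      case 1
      then obtain K where "\<forall>\<^sub>F S in F. Q S \<le> K * d S"
        using Q_linear by blast
      with dominated[of 1] have "\<forall>\<^sub>F S in F. P S \<le> K * d S"
        by eventually_elim simp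
      then show ?thesis
        by blast
    qed (use P_linear False in simp)
  qed
  moreover have "(\<forall>r\<ge>r0. B r \<le> 0) \<or> (\<exists>K. \<forall>\<^sub>F S in F. Q S \<le> K * d S)"
  proof (cases "cB \<le> 0")
    case True
    then show ?thesis
      using same_sgn_iff(3) B by blast
  qed (use Q_linear in simp)
  moreover have "\<bar>A r\<bar> \<le> KA" "\<bar>B r\<bar> \<le> KB" if "r \<ge> r0" for r
    using A[OF that] B[OF that] by simp_all
  ultimately show ?thesis
    using eventually_linear_lower_bound[OF _ _ nonneg] by blast
qed

section \<open>The functions \<open>F_i = 1 / (p_c' f_i)\<close>\<close>

lemma lipschitz_on_Icc_if_continuous_deriv:
  fixes F F' :: "real \<Rightarrow> real"
  assumes deriv: "\<And>x. x \<in> {p..q} \<Longrightarrow> (F has_real_derivative F' x) (at x)"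
    and cont: "continuous_on {p..q} F'"
  shows "\<exists>L. L-lipschitz_on {p..q} F"
proof -
  obtain B where B: "B > 0" "\<And>x. x \<in> {p..q} \<Longrightarrow> norm (F' x) \<le> B"
    using compact_imp_bounded[OF compact_continuous_image[OF cont compact_Icc]]
    unfolding bounded_pos by auto
  have "B-lipschitz_on {p..q} F"
  proof (rule lipschitz_onI)
    fix x y assume "x \<in> {p..q}" "y \<in> {p..q}"
    then show "dist (F x) (F y) \<le> B * dist x y"
      using field_differentiable_bound[of "{p..q}" F F' B x y] deriv B
      by (simp add: dist_norm has_field_derivative_at_within)
  qed (use B in simp)
  then show ?thesis ..
qed

lemma has_real_derivative_Fi:
  assumes "(f has_real_derivative f' x) (at x)" "(dpc has_real_derivative dpc' x) (at x)"
    and "dpc x * f x \<noteq> 0"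
  shows "(Fi dpc f has_real_derivative - (dpc' x * f x + dpc x * f' x) / (dpc x * f x)\<^sup>2) (at x)"
proof -
  have "Fi dpc f = (\<lambda>x. inverse (dpc x * f x))"
    by (simp add: Fi_def fun_eq_iff divide_inverse)
  moreover have "- (inverse (dpc x * f x) * (dpc' x * f x + f' x * dpc x) * inverse (dpc x * f x))
      = - (dpc' x * f x + dpc x * f' x) / (dpc x * f x)\<^sup>2"
    using assms(3) by (simp add: power2_eq_square divide_inverse algebra_simps)
  ultimately show ?thesis
    using DERIV_inverse'[OF DERIV_mult[OF assms(2,1)] assms(3)] by simp
qed

lemma Fi_regular:
  fixes f f' dpc dpc' :: "real \<Rightarrow> real"
  assumes f_der: "\<And>x. x \<in> {0<..<1} \<Longrightarrow> (f has_real_derivative f' x) (at x)"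
    and dpc_der: "\<And>x. x \<in> {0<..<1} \<Longrightarrow> (dpc has_real_derivative dpc' x) (at x)"
    and f'_cont: "continuous_on {0<..<1} f'" and dpc'_cont: "continuous_on {0<..<1} dpc'"
    and pos: "\<And>x. x \<in> {0<..<1} \<Longrightarrow> 0 < dpc x * f x"
  shows Fi_differentiable: "\<And>x. x \<in> {0<..<1} \<Longrightarrow> Fi dpc f differentiable (at x)"
    and continuous_on_Fi: "continuous_on {0<..<1} (Fi dpc f)"
    and Fi_pos: "\<And>x. x \<in> {0<..<1} \<Longrightarrow> 0 < Fi dpc f x"
    and lipschitz_on_Fi: "\<And>p q. 0 < p \<Longrightarrow> q < 1 \<Longrightarrow> \<exists>L. L-lipschitz_on {p..q} (Fi dpc f)"
proof -
  define Fd where "Fd x = - (dpc' x * f x + dpc x * f' x) / (dpc x * f x)\<^sup>2" for x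
  have der: "(Fi dpc f has_real_derivative Fd x) (at x)" if "x \<in> {0<..<1}" for x
    unfolding Fd_def using pos[OF that] by (intro has_real_derivative_Fi f_der dpc_der that) linarith
  then show "Fi dpc f differentiable (at x)" if "x \<in> {0<..<1}" for x
    using that by (auto simp: real_differentiable_def)
  show "continuous_on {0<..<1} (Fi dpc f)"
    using der DERIV_isCont by (blast intro: continuous_at_imp_continuous_on)
  show "0 < Fi dpc f x" if "x \<in> {0<..<1}" for x
    using pos[OF that] by (simp add: Fi_def)
  have "continuous_on {0<..<1} f" "continuous_on {0<..<1} dpc"
    using f_der dpc_der DERIV_isCont by (blast intro: continuous_at_imp_continuous_on)+
  moreover have "(dpc x * f x)\<^sup>2 \<noteq> 0" if "x \<in> {0<..<1}" for x
    using pos[OF that] by (intro power_not_zero) linarith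
  ultimately have "continuous_on {0<..<1} Fd"
    unfolding Fd_def by (intro continuous_intros f'_cont dpc'_cont) auto
  then show "\<exists>L. L-lipschitz_on {p..q} (Fi dpc f)" if "0 < p" "q < 1" for p q
    using that der by (intro lipschitz_on_Icc_if_continuous_deriv[of p q _ Fd])
      (auto intro: continuous_on_subset)
qed

lemma eventually_Fi_dominates:
  fixes f g dpc :: "real \<Rightarrow> real" and F :: "real filter"
  assumes f: "(f \<longlongrightarrow> 0) F" and g: "(g \<longlongrightarrow> l) F" "0 < l"
    and pos: "\<forall>\<^sub>F x in F. 0 < f x \<and> 0 < dpc x"
  shows "\<forall>\<^sub>F x in F. M * Fi dpc g x \<le> Fi dpc f x"
proof -
  have "((\<lambda>x. g x - M * f x) \<longlongrightarrow> l - M * 0) F"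
    by (intro tendsto_intros f g)
  then have "\<forall>\<^sub>F x in F. 0 < g x - M * f x"
    using g(2) by (intro order_tendstoD) auto
  moreover have "\<forall>\<^sub>F x in F. 0 < g x"
    using g by (intro order_tendstoD)
  ultimately show ?thesis
    using pos
  proof eventually_elim
    case (elim x)
    then have "Fi dpc f x - M * Fi dpc g x = (g x - M * f x) / (dpc x * f x * g x)"
      by (simp add: Fi_def field_simps)
    also have "\<dots> \<ge> 0"
      using elim by simp
    finally show ?case
      by simp
  qed
qed

lemma pos_if_DERIV_pos_from_zero:
  fixes f f' :: "real \<Rightarrow> real"
  assumes "continuous_on {0..1} f" "f 0 = 0"
    and "\<And>x. x \<in> {0<..<1} \<Longrightarrow> (f has_real_derivative f' x) (at x)" "\<And>x. x \<in> {0<..<1} \<Longrightarrow> 0 < f' x"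
    and "x \<in> {0<..1}"
  shows "0 < f x"
proof -
  have "f 0 < f x"
  proof (rule DERIV_pos_imp_increasing_open[of 0 x f])
    show "0 < x"
      using assms(5) by simp
    show "\<exists>y. (f has_real_derivative y) (at t) \<and> 0 < y" if "0 < t" "t < x" for t
    proof -
      have "t \<in> {0<..<1}"
        using that assms(5) by simp
      then show ?thesis
        using assms(3,4) by blast
    qed
    show "continuous_on {0..x} f"
      by (rule continuous_on_subset[OF assms(1)]) (use assms(5) in auto)
  qed
  then show ?thesis
    using assms(2) by simp
qed

lemma pos_if_DERIV_neg_to_zero:
  fixes f f' :: "real \<Rightarrow> real"
  assumes "continuous_on {0..1} f" "f 1 = 0"
    and "\<And>x. x \<in> {0<..<1} \<Longrightarrow> (f has_real_derivative f' x) (at x)" "\<And>x. x \<in> {0<..<1} \<Longrightarrow> f' x < 0"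
    and "x \<in> {0..<1}"
  shows "0 < f x"
proof -
  have "f 1 < f x"
  proof (rule DERIV_neg_imp_decreasing_open[of x 1 f])
    show "x < 1"
      using assms(5) by simp
    show "\<exists>y. (f has_real_derivative y) (at t) \<and> y < 0" if "x < t" "t < 1" for t
    proof -
      have "t \<in> {0<..<1}"
        using that assms(5) by simp
      then show ?thesis
        using assms(3,4) by blast
    qed
    show "continuous_on {x..1} f"
      by (rule continuous_on_subset[OF assms(1)]) (use assms(5) in auto)
  qed
  then show ?thesis
    using assms(2) by simp
qed

locale two_phase_flux =
  fixes f1 f2 f1' f2' dpc dpc' :: "real \<Rightarrow> real"
  assumes f1_cont: "continuous_on {0..1} f1" and f2_cont: "continuous_on {0..1} f2"
    and f1_der: "\<And>x. x \<in> {0<..<1} \<Longrightarrow> (f1 has_real_derivative f1' x) (at x)"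
    and f2_der: "\<And>x. x \<in> {0<..<1} \<Longrightarrow> (f2 has_real_derivative f2' x) (at x)"
    and f1'_cont: "continuous_on {0<..<1} f1'" and f2'_cont: "continuous_on {0<..<1} f2'"
    and f1_0: "f1 0 = 0" and f2_1: "f2 1 = 0"
    and f1'_pos: "\<And>x. x \<in> {0<..<1} \<Longrightarrow> f1' x > 0"
    and f2'_neg: "\<And>x. x \<in> {0<..<1} \<Longrightarrow> f2' x < 0"
    and dpc_der: "\<And>x. x \<in> {0<..<1} \<Longrightarrow> (dpc has_real_derivative dpc' x) (at x)"
    and dpc'_cont: "continuous_on {0<..<1} dpc'"
    and dpc_pos: "\<And>x. x \<in> {0<..<1} \<Longrightarrow> dpc x > 0"
    and P1: "filterlim (\<lambda>S. dpc S * f1 S) at_top (at_right 0)"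
    and P2: "filterlim (\<lambda>S. dpc S * f2 S) at_top (at_left 1)"
begin

abbreviation "F1 \<equiv> Fi dpc f1"
abbreviation "F2 \<equiv> Fi dpc f2"

lemma f1_pos: "x \<in> {0<..1} \<Longrightarrow> 0 < f1 x"
  by (rule pos_if_DERIV_pos_from_zero[OF f1_cont f1_0 f1_der f1'_pos])

lemma f2_pos: "x \<in> {0..<1} \<Longrightarrow> 0 < f2 x"
  by (rule pos_if_DERIV_neg_to_zero[OF f2_cont f2_1 f2_der f2'_neg])

lemma dpc_f_pos: "x \<in> {0<..<1} \<Longrightarrow> 0 < dpc x * f1 x" "x \<in> {0<..<1} \<Longrightarrow> 0 < dpc x * f2 x"
  using dpc_pos f1_pos f2_pos by simp_all

lemmas F1 = Fi_regular[OF f1_der dpc_der f1'_cont dpc'_cont dpc_f_pos(1)]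
  and F2 = Fi_regular[OF f2_der dpc_der f2'_cont dpc'_cont dpc_f_pos(2)]

lemma F_nonneg: "0 < S \<Longrightarrow> S < 1 \<Longrightarrow> 0 \<le> F1 S \<and> 0 \<le> F2 S"
  using F1(3)[of S] F2(3)[of S] by simp

lemma eventually_in_unit_interval:
  "\<forall>\<^sub>F S in at_right 0. 0 < S \<and> S < (1::real)" "\<forall>\<^sub>F S in at_left 1. 0 < S \<and> S < (1::real)"
  using eventually_at_right_real[of 0 1] eventually_at_left_real[of 0 1] by simp_all

lemma F1_tendsto_at_0: "(F1 \<longlongrightarrow> 0) (at_right 0)"
  and F2_tendsto_at_1: "(F2 \<longlongrightarrow> 0) (at_left 1)"
  using tendsto_inverse_0_at_top[OF P1] tendsto_inverse_0_at_top[OF P2]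
  by (simp_all add: Fi_def[abs_def] inverse_eq_divide)

lemma F2_dominated_at_0: "\<forall>\<^sub>F S in at_right 0. M * F2 S \<le> F1 S"
proof (rule eventually_Fi_dominates)
  show "(f1 \<longlongrightarrow> 0) (at_right 0)" "(f2 \<longlongrightarrow> f2 0) (at_right 0)"
    using continuous_on_Icc_at_rightD[OF f1_cont] continuous_on_Icc_at_rightD[OF f2_cont] f1_0
    by simp_all
  show "0 < f2 0"
    by (rule f2_pos) simp
  show "\<forall>\<^sub>F x in at_right 0. 0 < f1 x \<and> 0 < dpc x"
    using eventually_in_unit_interval(1) by eventually_elim (simp add: f1_pos dpc_pos)
qed

lemma F1_dominated_at_1: "\<forall>\<^sub>F S in at_left 1. M * F1 S \<le> F2 S"
proof (rule eventually_Fi_dominates)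
  show "(f2 \<longlongrightarrow> 0) (at_left 1)" "(f1 \<longlongrightarrow> f1 1) (at_left 1)"
    using continuous_on_Icc_at_leftD[OF f2_cont] continuous_on_Icc_at_leftD[OF f1_cont] f2_1
    by simp_all
  show "0 < f1 1"
    by (rule f1_pos) simp
  show "\<forall>\<^sub>F x in at_left 1. 0 < f2 x \<and> 0 < dpc x"
    using eventually_in_unit_interval(2) by eventually_elim (simp add: f2_pos dpc_pos)
qed

lemma F2_tendsto_at_0: "(F2 \<longlongrightarrow> 0) (at_right 0)"
proof (rule tendsto_sandwich[OF _ _ tendsto_const F1_tendsto_at_0])
  show "\<forall>\<^sub>F S in at_right 0. 0 \<le> F2 S"
    using eventually_in_unit_interval(1) by eventually_elim (simp add: F_nonneg)
qed (use F2_dominated_at_0[of 1] in simp)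

lemma F1_tendsto_at_1: "(F1 \<longlongrightarrow> 0) (at_left 1)"
proof (rule tendsto_sandwich[OF _ _ tendsto_const F2_tendsto_at_1])
  show "\<forall>\<^sub>F S in at_left 1. 0 \<le> F1 S"
    using eventually_in_unit_interval(2) by eventually_elim (simp add: F_nonneg)
qed (use F1_dominated_at_1[of 1] in simp)

lemma lower_barrier:
  fixes A B :: "real \<Rightarrow> real" and r0 KA KB c1 c2 :: real
  assumes A: "\<And>r. r \<ge> r0 \<Longrightarrow> \<bar>A r\<bar> \<le> KA \<and> sgn (A r) = sgn c2"
    and B: "\<And>r. r \<ge> r0 \<Longrightarrow> \<bar>B r\<bar> \<le> KB \<and> sgn (B r) = sgn c1"
    and comparable: "c2 < 0 \<Longrightarrow> c1 < 0 \<Longrightarrow> \<exists>M. \<forall>r\<ge>r0. \<bar>A r\<bar> \<le> M * \<bar>B r\<bar>"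
    and C1: "0 < c1 \<Longrightarrow> Limsup (at_right 0) (\<lambda>S. ereal (deriv F1 S)) < \<infinity>"
    and C4: "c1 = 0 \<Longrightarrow> c2 < 0 \<Longrightarrow> Limsup (at_right 0) (\<lambda>S. ereal (deriv F2 S)) < \<infinity>"
  shows "\<exists>C. \<forall>\<^sub>F S in at_right 0. \<forall>r\<ge>r0. - C * S \<le> A r * F2 S - B r * F1 S"
proof (rule eventually_linear_lower_bound_by_signs[where d = "\<lambda>S. S", OF A B comparable])
  show "\<forall>\<^sub>F S in at_right 0. 0 \<le> F2 S \<and> 0 \<le> F1 S \<and> 0 \<le> S"
    using eventually_in_unit_interval(1) by eventually_elim (simp add: F_nonneg)
  show "\<exists>K. \<forall>\<^sub>F S in at_right 0. F1 S \<le> K * S" if "0 < c1"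
    using C1[OF that] by (intro eventually_le_linear_at_right_0 F1(1) F1_tendsto_at_0)
  show "\<exists>K. \<forall>\<^sub>F S in at_right 0. F2 S \<le> K * S" if "c1 = 0" "c2 < 0"
    using C4[OF that] by (intro eventually_le_linear_at_right_0 F2(1) F2_tendsto_at_0)
qed (simp_all add: F2_dominated_at_0)

lemma upper_barrier:
  fixes A B :: "real \<Rightarrow> real" and r0 KA KB c1 c2 :: real
  assumes A: "\<And>r. r \<ge> r0 \<Longrightarrow> \<bar>A r\<bar> \<le> KA \<and> sgn (A r) = sgn c2"
    and B: "\<And>r. r \<ge> r0 \<Longrightarrow> \<bar>B r\<bar> \<le> KB \<and> sgn (B r) = sgn c1"
    and comparable: "c1 < 0 \<Longrightarrow> c2 < 0 \<Longrightarrow> \<exists>M. \<forall>r\<ge>r0. \<bar>B r\<bar> \<le> M * \<bar>A r\<bar>"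
    and C3: "0 < c2 \<Longrightarrow> Liminf (at_left 1) (\<lambda>S. ereal (deriv F2 S)) > - \<infinity>"
    and C2: "c2 = 0 \<Longrightarrow> c1 < 0 \<Longrightarrow> Liminf (at_left 1) (\<lambda>S. ereal (deriv F1 S)) > - \<infinity>"
  shows "\<exists>C. \<forall>\<^sub>F S in at_left 1. \<forall>r\<ge>r0. - C * (1 - S) \<le> B r * F1 S - A r * F2 S"
proof (rule eventually_linear_lower_bound_by_signs[where d = "\<lambda>S. 1 - S", OF B A comparable])
  show "\<forall>\<^sub>F S in at_left 1. 0 \<le> F1 S \<and> 0 \<le> F2 S \<and> 0 \<le> 1 - S"
    using eventually_in_unit_interval(2) by eventually_elim (simp add: F_nonneg)
  show "\<exists>K. \<forall>\<^sub>F S in at_left 1. F2 S \<le> K * (1 - S)" if "0 < c2"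
    using C3[OF that] by (intro eventually_le_linear_at_left_1 F2(1) F2_tendsto_at_1)
  show "\<exists>K. \<forall>\<^sub>F S in at_left 1. F1 S \<le> K * (1 - S)" if "c2 = 0" "c1 < 0"
    using C2[OF that] by (intro eventually_le_linear_at_left_1 F1(1) F1_tendsto_at_1)
qed (simp_all add: F1_dominated_at_1)

end

section \<open>The coefficients \<open>G_i(c_i r^(1-n))\<close>\<close>

lemma gfun_ge:
  assumes "admissible_g N a \<alpha>" "0 \<le> s"
  shows "a 0 \<le> gfun N a \<alpha> s"
proof -
  have "0 \<le> (\<Sum>j=1..N. a j * s powr \<alpha> j)"
    using assms by (intro sum_nonneg) (auto simp: admissible_g_def)
  then show ?thesis
    by (simp add: gfun_def)
qed

lemma gfun_mono:
  assumes "admissible_g N a \<alpha>" "0 \<le> s" "s \<le> t"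
  shows "gfun N a \<alpha> s \<le> gfun N a \<alpha> t"
proof -
  have "(\<Sum>j=1..N. a j * s powr \<alpha> j) \<le> (\<Sum>j=1..N. a j * t powr \<alpha> j)"
    using assms by (intro sum_mono mult_left_mono powr_mono2) (auto simp: admissible_g_def less_imp_le)
  then show ?thesis
    by (simp add: gfun_def)
qed

lemma continuous_on_Gfun:
  assumes "admissible_g N a \<alpha>"
  shows "continuous_on A (Gfun N a \<alpha>)"
proof -
  have "continuous_on A (\<lambda>u. \<bar>u\<bar> powr \<alpha> j)" if "j \<in> {1..N}" for j
    using assms that by (intro continuous_on_powr' continuous_intros) (auto simp: admissible_g_def)
  then have "continuous_on A (\<lambda>u. gfun N a \<alpha> \<bar>u\<bar>)"
    unfolding gfun_def
    by (intro continuous_on_add continuous_on_const continuous_on_sum continuous_on_mult_left) auto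
  then show ?thesis
    unfolding Gfun_def[abs_def] by (intro continuous_on_mult continuous_on_id)
qed

lemma sgn_Gfun:
  assumes "admissible_g N a \<alpha>"
  shows "sgn (Gfun N a \<alpha> u) = sgn u"
proof -
  have "0 < gfun N a \<alpha> \<bar>u\<bar>"
    using gfun_ge[OF assms, of "\<bar>u\<bar>"] assms by (simp add: admissible_g_def)
  then show ?thesis
    by (simp add: Gfun_def sgn_mult)
qed

lemma abs_Gfun_bounds:
  assumes adm: "admissible_g N a \<alpha>" and "\<bar>u\<bar> \<le> U"
  shows "a 0 * \<bar>u\<bar> \<le> \<bar>Gfun N a \<alpha> u\<bar>" "\<bar>Gfun N a \<alpha> u\<bar> \<le> gfun N a \<alpha> U * \<bar>u\<bar>"
proof -
  have "a 0 \<le> gfun N a \<alpha> \<bar>u\<bar>" "gfun N a \<alpha> \<bar>u\<bar> \<le> gfun N a \<alpha> U"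
    using assms by (auto intro: gfun_ge gfun_mono)
  moreover have "0 < a 0"
    using adm by (simp add: admissible_g_def)
  ultimately show "a 0 * \<bar>u\<bar> \<le> \<bar>Gfun N a \<alpha> u\<bar>" "\<bar>Gfun N a \<alpha> u\<bar> \<le> gfun N a \<alpha> U * \<bar>u\<bar>"
    by (auto simp: Gfun_def abs_mult intro: mult_right_mono)
qed

lemma Gfun_coefficient:
  fixes \<rho> :: "real \<Rightarrow> real"
  assumes adm: "admissible_g N a \<alpha>" and \<rho>: "continuous_on {r0..} \<rho>"
    and \<rho>_bound: "\<And>r. r \<ge> r0 \<Longrightarrow> 0 < \<rho> r \<and> \<rho> r \<le> R"
  shows "continuous_on {r0..} (\<lambda>r. Gfun N a \<alpha> (c * \<rho> r))"
    and "\<And>r. r \<ge> r0 \<Longrightarrow> \<bar>Gfun N a \<alpha> (c * \<rho> r)\<bar> \<le> gfun N a \<alpha> (\<bar>c\<bar> * R) * (\<bar>c\<bar> * R)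
      \<and> sgn (Gfun N a \<alpha> (c * \<rho> r)) = sgn c"
proof -
  show "continuous_on {r0..} (\<lambda>r. Gfun N a \<alpha> (c * \<rho> r))"
    by (rule continuous_on_compose2[OF continuous_on_Gfun[OF adm]]) (auto intro: continuous_intros \<rho>)
  fix r assume r: "r \<ge> r0"
  have le: "\<bar>c * \<rho> r\<bar> \<le> \<bar>c\<bar> * R"
    using \<rho>_bound[OF r] by (simp add: abs_mult mult_left_mono)
  have "\<bar>Gfun N a \<alpha> (c * \<rho> r)\<bar> \<le> gfun N a \<alpha> (\<bar>c\<bar> * R) * \<bar>c * \<rho> r\<bar>"
    by (rule abs_Gfun_bounds[OF adm le])
  also have "\<dots> \<le> gfun N a \<alpha> (\<bar>c\<bar> * R) * (\<bar>c\<bar> * R)"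
  proof (rule mult_left_mono[OF le])
    have "0 \<le> \<bar>c\<bar> * R"
      using le abs_ge_zero order_trans by blast
    then show "0 \<le> gfun N a \<alpha> (\<bar>c\<bar> * R)"
      using gfun_ge[OF adm] adm by (force simp: admissible_g_def)
  qed
  finally show "\<bar>Gfun N a \<alpha> (c * \<rho> r)\<bar> \<le> gfun N a \<alpha> (\<bar>c\<bar> * R) * (\<bar>c\<bar> * R)
      \<and> sgn (Gfun N a \<alpha> (c * \<rho> r)) = sgn c"
    using \<rho>_bound[OF r] by (simp add: sgn_Gfun[OF adm] sgn_mult)
qed

lemma Gfun_coefficients_comparable:
  fixes \<rho> :: "real \<Rightarrow> real"
  assumes adm: "admissible_g N a \<alpha>" and adm': "admissible_g N' a' \<alpha>'" and "c' \<noteq> 0"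
    and \<rho>_bound: "\<And>r. r \<ge> r0 \<Longrightarrow> 0 < \<rho> r \<and> \<rho> r \<le> R"
  shows "\<exists>M. \<forall>r\<ge>r0. \<bar>Gfun N a \<alpha> (c * \<rho> r)\<bar> \<le> M * \<bar>Gfun N' a' \<alpha>' (c' * \<rho> r)\<bar>"
proof -
  define M where "M = gfun N a \<alpha> (\<bar>c\<bar> * R) * \<bar>c\<bar> / (a' 0 * \<bar>c'\<bar>)"
  have "0 < a' 0" "0 < a 0"
    using adm adm' by (simp_all add: admissible_g_def)
  have "\<bar>Gfun N a \<alpha> (c * \<rho> r)\<bar> \<le> M * \<bar>Gfun N' a' \<alpha>' (c' * \<rho> r)\<bar>" if r: "r \<ge> r0" for r
  proof -
    have "\<bar>Gfun N a \<alpha> (c * \<rho> r)\<bar> \<le> gfun N a \<alpha> (\<bar>c\<bar> * R) * \<bar>c * \<rho> r\<bar>"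
      using \<rho>_bound[OF r] by (intro abs_Gfun_bounds[OF adm]) (simp add: abs_mult mult_left_mono)
    also have "\<dots> = M * (a' 0 * \<bar>c' * \<rho> r\<bar>)"
      using \<open>0 < a' 0\<close> \<open>c' \<noteq> 0\<close> by (simp add: M_def abs_mult)
    also have "\<dots> \<le> M * \<bar>Gfun N' a' \<alpha>' (c' * \<rho> r)\<bar>"
      using abs_Gfun_bounds(1)[OF adm' order_refl] gfun_ge[OF adm, of "\<bar>c\<bar> * R"]
        \<open>0 < a' 0\<close> \<open>0 < a 0\<close> \<rho>_bound[OF r]
      by (intro mult_left_mono) (auto simp: M_def)
    finally show ?thesis .
  qed
  then show ?thesis
    by blast
qed

theorem theorem2p2:
  fixes n N1 N2 :: nat
    and a1 a2 \<alpha>1 \<alpha>2 :: "nat \<Rightarrow> real"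
    and f1 f2 f1' f2' pc dpc dpc' :: "real \<Rightarrow> real"
    and c1 c2 r0 s0 :: real
  assumes n: "n \<ge> 2"
    and g1: "admissible_g N1 a1 \<alpha>1" and g2: "admissible_g N2 a2 \<alpha>2"
    \<comment> \<open>Assumption A\<close>
    and f1_cont: "continuous_on {0..1} f1" and f2_cont: "continuous_on {0..1} f2"
    and f1_der: "\<And>x. x \<in> {0<..<1} \<Longrightarrow> (f1 has_real_derivative f1' x) (at x)"
    and f2_der: "\<And>x. x \<in> {0<..<1} \<Longrightarrow> (f2 has_real_derivative f2' x) (at x)"
    and f1'_cont: "continuous_on {0<..<1} f1'" and f2'_cont: "continuous_on {0<..<1} f2'"
    and f1_0: "f1 0 = 0" and f2_1: "f2 1 = 0"
    and f1'_pos: "\<And>x. x \<in> {0<..<1} \<Longrightarrow> f1' x > 0"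
    and f2'_neg: "\<And>x. x \<in> {0<..<1} \<Longrightarrow> f2' x < 0"
    \<comment> \<open>Assumption B (dpc = p_c', dpc' = p_c'')\<close>
    and pc_der: "\<And>x. x \<in> {0<..<1} \<Longrightarrow> (pc has_real_derivative dpc x) (at x)"
    and dpc_der: "\<And>x. x \<in> {0<..<1} \<Longrightarrow> (dpc has_real_derivative dpc' x) (at x)"
    and dpc'_cont: "continuous_on {0<..<1} dpc'"
    and dpc_pos: "\<And>x. x \<in> {0<..<1} \<Longrightarrow> dpc x > 0"
    \<comment> \<open>Condition (P)\<close>
    and P1: "filterlim (\<lambda>S. dpc S * f1 S) at_top (at_right 0)"
    and P2: "filterlim (\<lambda>S. dpc S * f2 S) at_top (at_left 1)"
    and c: "c1\<^sup>2 + c2\<^sup>2 > 0"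
    and r0: "r0 > 0" and s0: "0 < s0" "s0 < 1"
    and cases:
      "(c2 \<le> 0 \<and> 0 < c1 \<and> Limsup (at_right 0) (\<lambda>S. ereal (deriv (Fi dpc f1) S)) < \<infinity>)
     \<or> (c1 = 0 \<and> c2 < 0 \<and> Limsup (at_right 0) (\<lambda>S. ereal (deriv (Fi dpc f2) S)) < \<infinity>)
     \<or> (c1 \<le> 0 \<and> 0 < c2 \<and> Liminf (at_left 1) (\<lambda>S. ereal (deriv (Fi dpc f2) S)) > -\<infinity>)
     \<or> (c2 = 0 \<and> c1 < 0 \<and> Liminf (at_left 1) (\<lambda>S. ereal (deriv (Fi dpc f1) S)) > -\<infinity>)
     \<or> (c1 > 0 \<and> c2 > 0 \<and> Limsup (at_right 0) (\<lambda>S. ereal (deriv (Fi dpc f1) S)) < \<infinity>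
                        \<and> Liminf (at_left 1) (\<lambda>S. ereal (deriv (Fi dpc f2) S)) > -\<infinity>)
     \<or> (c1 < 0 \<and> c2 < 0)"
  shows "\<exists>S :: real \<Rightarrow> real. S r0 = s0 \<and> continuous_on {r0..} S
     \<and> (\<forall>r\<ge>r0. 0 < S r \<and> S r < 1)
     \<and> (\<forall>r>r0. (S has_real_derivative
            Frhs n c1 c2 (Gfun N1 a1 \<alpha>1) (Gfun N2 a2 \<alpha>2) dpc f1 f2 r (S r)) (at r))"
proof -
  interpret two_phase_flux f1 f2 f1' f2' dpc dpc'
    using f1_cont f2_cont f1_der f2_der f1'_cont f2'_cont f1_0 f2_1 f1'_pos f2'_neg
      dpc_der dpc'_cont dpc_pos P1 P2
    by unfold_locales
  define \<rho> where "\<rho> r = r powr (1 - real n)" for r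
  define A where "A r = Gfun N2 a2 \<alpha>2 (c2 * \<rho> r)" for r
  define B where "B r = Gfun N1 a1 \<alpha>1 (c1 * \<rho> r)" for r
  have \<rho>: "continuous_on {r0..} \<rho>" "\<And>r. r \<ge> r0 \<Longrightarrow> 0 < \<rho> r \<and> \<rho> r \<le> \<rho> r0"
    using r0 n by (auto simp: \<rho>_def intro!: continuous_intros powr_mono2')
  obtain KA KB where
    A: "continuous_on {r0..} A" "\<And>r. r \<ge> r0 \<Longrightarrow> \<bar>A r\<bar> \<le> KA \<and> sgn (A r) = sgn c2" and
    B: "continuous_on {r0..} B" "\<And>r. r \<ge> r0 \<Longrightarrow> \<bar>B r\<bar> \<le> KB \<and> sgn (B r) = sgn c1"
    unfolding A_def B_def using Gfun_coefficient[OF g2 \<rho>] Gfun_coefficient[OF g1 \<rho>] by metis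
  have "\<exists>C. \<forall>\<^sub>F S in at_right 0. \<forall>r\<ge>r0. - C * S \<le> A r * F2 S - B r * F1 S"
  proof (rule lower_barrier[OF A(2) B(2)])
    show "\<exists>M. \<forall>r\<ge>r0. \<bar>A r\<bar> \<le> M * \<bar>B r\<bar>" if "c1 < 0"
      unfolding A_def B_def using that by (intro Gfun_coefficients_comparable[OF g2 g1 _ \<rho>(2)]) simp
  qed (use cases in auto)
  moreover have "\<exists>C. \<forall>\<^sub>F S in at_left 1. \<forall>r\<ge>r0. - C * (1 - S) \<le> B r * F1 S - A r * F2 S"
  proof (rule upper_barrier[OF A(2) B(2)])
    show "\<exists>M. \<forall>r\<ge>r0. \<bar>B r\<bar> \<le> M * \<bar>A r\<bar>" if "c2 < 0"
      unfolding A_def B_def using that by (intro Gfun_coefficients_comparable[OF g1 g2 _ \<rho>(2)]) simp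
  qed (use cases in auto)
  ultimately have "\<exists>S. S r0 = s0 \<and> continuous_on {r0..} S \<and> (\<forall>r\<ge>r0. 0 < S r \<and> S r < 1)
     \<and> (\<forall>r>r0. (S has_real_derivative A r * F2 (S r) - B r * F1 (S r)) (at r))"
    using A(2) B(2)
    by (intro unit_interval_solution_of_combination[where KA = KA and KB = KB,
          OF A(1) _ B(1) _ F2(2,4) F1(2,4) _ _ s0]) auto
  then show ?thesis
    by (simp add: Frhs_def A_def B_def \<rho>_def)
qed

end
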